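(* Let $(G,\mathcal J)$ be a generalized Kähler structure on a Courant algebroid $E$, with associated decomposition $E=E_+\oplus E_-$, and for $e\in E$ write $e_\pm$ for its $E_\pm$-components. Then $$[u,\mathcal Jv]_+-\mathcal J[u,v]_+=0\quad\text{for all }u\in\Gamma(E_-),\ v\in\Gamma(E_+),$$ and $$[u,\mathcal Jv]_--\mathcal J[u,v]_-=0\quad\text{for all }u\in\Gamma(E_+),\ v\in\Gamma(E_-).$$
   Context: A Courant algebroid on $M$ is a real vector bundle $E\to M$ with nondegenerate symmetric bilinear form $\langle\cdot,\cdot\rangle$, an $\mathbb R$-bilinear bracket $[\cdot,\cdot]$ on $\Gamma(E)$ (Dorfman bracket) and bundle map $\pi:E\to TM$ such that for $u,v,w\in\Gamma(E)$, $f\in C^\infty(M)$: $[u,[v,w]]=[[u,v],w]+[v,[u,w]]$; $\pi([u,v])=[\pi(u),\pi(v)]$; $[u,fv]=\pi(u)(f)v+f[u,v]$; $\pi(u)\langle v,w\rangle=\langle[u,v],w\rangle+\langle v,[u,w]\rangle$; $2\langle[u,u],v\rangle=\pi(v)\langle u,u\rangle$. A generalized metric is a subbundle $E_+$ on which $\langle\cdot,\cdot\rangle$ is nondegenerate; $E_-=E_+^\perp$, $G=\langle\cdot,\cdot\rangle|_{E_+}-\langle\cdot,\cdot\rangle|_{E_-}$, $G^{\mathrm{end}}=\pm\mathrm{Id}$ on $E_\pm$. A generalized almost complex structure is a $\langle\cdot,\cdot\rangle$-orthogonal $\mathcal J$ with $\mathcal J^2=-\mathrm{Id}$, integrable if $[\mathcal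 Ju,\mathcal Jv]-[u,v]-\mathcal J([\mathcal Ju,v]+[u,\mathcal Jv])=0$. $(G,\mathcal J)$ is generalized almost Hermitian if $G(\mathcal Ju,\mathcal Jv)=G(u,v)$ (then $\mathcal J$ preserves $E_\pm$), and generalized Kähler if moreover $\mathcal J$ and $G^{\mathrm{end}}\mathcal J$ are integrable. *)

theory Defs
  imports "HOL-Analysis.Analysis"
begin

(* Model: M is a type 'm; E is a smooth vector bundle with finite-dimensional fibres
   E x (subspaces of a euclidean space 'v); C is the algebra of smooth functions;
   Gam is the space of smooth sections Gamma(E).  Vector fields are represented as
   derivations of C (so the anchor is a C-linear map Gamma(E) -> Der(C)). *)

definition function_algebra :: "('m \<Rightarrow> real) set \<Rightarrow> bool" where
  "function_algebra C \<longleftrightarrow>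
     (\<forall>c::real. (\<lambda>x. c) \<in> C) \<and>
     (\<forall>f\<in>C. \<forall>g\<in>C. (\<lambda>x. f x + g x) \<in> C \<and> (\<lambda>x. f x * g x) \<in> C)"

definition bundle_sections ::
  "('m \<Rightarrow> real) set \<Rightarrow> ('m \<Rightarrow> 'v::euclidean_space set) \<Rightarrow> ('m \<Rightarrow> 'v) set \<Rightarrow> bool" where
  "bundle_sections C E Gam \<longleftrightarrow>
     (\<forall>x. subspace (E x)) \<and>
     (\<forall>s\<in>Gam. \<forall>x. s x \<in> E x) \<and>
     (\<forall>x. \<forall>e\<in>E x. \<exists>s\<in>Gam. s x = e) \<and>
     (\<lambda>x. 0) \<in> Gam \<and>
     (\<forall>s\<in>Gam. \<forall>t\<in>Gam. (\<lambda>x. s x + t x) \<in> Gam) \<and>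
     (\<forall>f\<in>C. \<forall>s\<in>Gam. (\<lambda>x. f x *\<^sub>R s x) \<in> Gam)"

definition sym_bilinear_on :: "('m \<Rightarrow> 'v::real_vector set) \<Rightarrow> ('m \<Rightarrow> 'v \<Rightarrow> 'v \<Rightarrow> real) \<Rightarrow> bool" where
  "sym_bilinear_on E ip \<longleftrightarrow>
     (\<forall>x. \<forall>a\<in>E x. \<forall>b\<in>E x. \<forall>c\<in>E x. \<forall>r::real.
        ip x (a + b) c = ip x a c + ip x b c \<and>
        ip x (r *\<^sub>R a) c = r * ip x a c \<and>
        ip x a b = ip x b a)"

definition nondegenerate_on :: "('m \<Rightarrow> 'v::real_vector set) \<Rightarrow> ('m \<Rightarrow> 'v \<Rightarrow> 'v \<Rightarrow> real) \<Rightarrow> bool" where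
  "nondegenerate_on S ip \<longleftrightarrow> (\<forall>x. \<forall>a\<in>S x. (\<forall>b\<in>S x. ip x a b = 0) \<longrightarrow> a = 0)"

definition courant_algebroid ::
  "('m \<Rightarrow> real) set \<Rightarrow> ('m \<Rightarrow> 'v::euclidean_space set) \<Rightarrow> ('m \<Rightarrow> 'v) set
   \<Rightarrow> ('m \<Rightarrow> 'v \<Rightarrow> 'v \<Rightarrow> real)
   \<Rightarrow> (('m \<Rightarrow> 'v) \<Rightarrow> ('m \<Rightarrow> 'v) \<Rightarrow> ('m \<Rightarrow> 'v))
   \<Rightarrow> (('m \<Rightarrow> 'v) \<Rightarrow> ('m \<Rightarrow> real) \<Rightarrow> ('m \<Rightarrow> real)) \<Rightarrow> bool" where
  "courant_algebroid C E Gam ip br anc \<longleftrightarrow>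
     function_algebra C \<and> bundle_sections C E Gam \<and>
     sym_bilinear_on E ip \<and> nondegenerate_on E ip \<and>
     (\<forall>u\<in>Gam. \<forall>v\<in>Gam. (\<lambda>x. ip x (u x) (v x)) \<in> C) \<and>
     \<comment> \<open>anchor: C-linear map from sections to derivations of C (vector fields)\<close>
     (\<forall>u\<in>Gam. \<forall>f\<in>C. anc u f \<in> C) \<and>
     (\<forall>u\<in>Gam. \<forall>f\<in>C. \<forall>g\<in>C. \<forall>r::real.
        anc u (\<lambda>x. f x + g x) = (\<lambda>x. anc u f x + anc u g x) \<and>
        anc u (\<lambda>x. r * f x) = (\<lambda>x. r * anc u f x) \<and>
        anc u (\<lambda>x. f x * g x) = (\<lambda>x. f x * anc u g x + g x * anc u f x)) \<and>
     (\<forall>u\<in>Gam. \<forall>v\<in>Gam. \<forall>h\<in>C. \<forall>f\<in>C.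
        anc (\<lambda>x. u x + v x) f = (\<lambda>x. anc u f x + anc v f x) \<and>
        anc (\<lambda>x. h x *\<^sub>R u x) f = (\<lambda>x. h x * anc u f x)) \<and>
     \<comment> \<open>the bracket: R-bilinear on sections\<close>
     (\<forall>u\<in>Gam. \<forall>v\<in>Gam. br u v \<in> Gam) \<and>
     (\<forall>u\<in>Gam. \<forall>v\<in>Gam. \<forall>w\<in>Gam. \<forall>r::real.
        br (\<lambda>x. u x + v x) w = (\<lambda>x. br u w x + br v w x) \<and>
        br w (\<lambda>x. u x + v x) = (\<lambda>x. br w u x + br w v x) \<and>
        br (\<lambda>x. r *\<^sub>R u x) w = (\<lambda>x. r *\<^sub>R br u w x) \<and>
        br w (\<lambda>x. r *\<^sub>R u x) = (\<lambda>x. r *\<^sub>R br w u x)) \<and>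
     \<comment> \<open>Courant algebroid axioms\<close>
     (\<forall>u\<in>Gam. \<forall>v\<in>Gam. \<forall>w\<in>Gam.
        br u (br v w) = (\<lambda>x. br (br u v) w x + br v (br u w) x)) \<and>
     (\<forall>u\<in>Gam. \<forall>v\<in>Gam. \<forall>f\<in>C.
        anc (br u v) f = (\<lambda>x. anc u (anc v f) x - anc v (anc u f) x)) \<and>
     (\<forall>u\<in>Gam. \<forall>v\<in>Gam. \<forall>f\<in>C.
        br u (\<lambda>x. f x *\<^sub>R v x) = (\<lambda>x. anc u f x *\<^sub>R v x + f x *\<^sub>R br u v x)) \<and>
     (\<forall>u\<in>Gam. \<forall>v\<in>Gam. \<forall>w\<in>Gam.
        anc u (\<lambda>x. ip x (v x) (w x)) = (\<lambda>x. ip x (br u v x) (w x) + ip x (v x) (br u w x))) \<and>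
     (\<forall>u\<in>Gam. \<forall>v\<in>Gam.
        (\<lambda>x. 2 * ip x (br u u x) (v x)) = anc v (\<lambda>x. ip x (u x) (u x)))"

definition Eminus :: "('m \<Rightarrow> 'v::real_vector set) \<Rightarrow> ('m \<Rightarrow> 'v \<Rightarrow> 'v \<Rightarrow> real) \<Rightarrow> ('m \<Rightarrow> 'v set) \<Rightarrow> 'm \<Rightarrow> 'v set" where
  "Eminus E ip Ep x = {e \<in> E x. \<forall>a\<in>Ep x. ip x e a = 0}"

definition pplus :: "('m \<Rightarrow> 'v::real_vector set) \<Rightarrow> ('m \<Rightarrow> 'v \<Rightarrow> 'v \<Rightarrow> real) \<Rightarrow> ('m \<Rightarrow> 'v set) \<Rightarrow> 'm \<Rightarrow> 'v \<Rightarrow> 'v" where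
  "pplus E ip Ep x e = (THE a. a \<in> Ep x \<and> e - a \<in> Eminus E ip Ep x)"

definition pminus :: "('m \<Rightarrow> 'v::real_vector set) \<Rightarrow> ('m \<Rightarrow> 'v \<Rightarrow> 'v \<Rightarrow> real) \<Rightarrow> ('m \<Rightarrow> 'v set) \<Rightarrow> 'm \<Rightarrow> 'v \<Rightarrow> 'v" where
  "pminus E ip Ep x e = e - pplus E ip Ep x e"

definition generalized_metric ::
  "('m \<Rightarrow> 'v::real_vector set) \<Rightarrow> ('m \<Rightarrow> 'v) set \<Rightarrow> ('m \<Rightarrow> 'v \<Rightarrow> 'v \<Rightarrow> real) \<Rightarrow> ('m \<Rightarrow> 'v set) \<Rightarrow> bool" where
  "generalized_metric E Gam ip Ep \<longleftrightarrow>
     (\<forall>x. subspace (Ep x) \<and> Ep x \<subseteq> E x) \<and>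
     nondegenerate_on Ep ip \<and>
     \<comment> \<open>smoothness of the subbundle: the E_+ component of a smooth section is smooth\<close>
     (\<forall>s\<in>Gam. (\<lambda>x. pplus E ip Ep x (s x)) \<in> Gam)"

definition Gmet :: "('m \<Rightarrow> 'v::real_vector set) \<Rightarrow> ('m \<Rightarrow> 'v \<Rightarrow> 'v \<Rightarrow> real) \<Rightarrow> ('m \<Rightarrow> 'v set) \<Rightarrow> 'm \<Rightarrow> 'v \<Rightarrow> 'v \<Rightarrow> real" where
  "Gmet E ip Ep x a b = ip x (pplus E ip Ep x a) (pplus E ip Ep x b) - ip x (pminus E ip Ep x a) (pminus E ip Ep x b)"

definition Gend :: "('m \<Rightarrow> 'v::real_vector set) \<Rightarrow> ('m \<Rightarrow> 'v \<Rightarrow> 'v \<Rightarrow> real) \<Rightarrow> ('m \<Rightarrow> 'v set) \<Rightarrow> 'm \<Rightarrow> 'v \<Rightarrow> 'v" where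
  "Gend E ip Ep x a = pplus E ip Ep x a - pminus E ip Ep x a"

definition gen_almost_complex ::
  "('m \<Rightarrow> 'v::real_vector set) \<Rightarrow> ('m \<Rightarrow> 'v) set \<Rightarrow> ('m \<Rightarrow> 'v \<Rightarrow> 'v \<Rightarrow> real) \<Rightarrow> ('m \<Rightarrow> 'v \<Rightarrow> 'v) \<Rightarrow> bool" where
  "gen_almost_complex E Gam ip J \<longleftrightarrow>
     (\<forall>x. \<forall>a\<in>E x. \<forall>b\<in>E x. \<forall>r::real.
        J x a \<in> E x \<and> J x (a + b) = J x a + J x b \<and> J x (r *\<^sub>R a) = r *\<^sub>R J x a \<and>
        J x (J x a) = - a \<and> ip x (J x a) (J x b) = ip x a b) \<and>
     (\<forall>s\<in>Gam. (\<lambda>x. J x (s x)) \<in> Gam)"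

definition integrable ::
  "('m \<Rightarrow> 'v) set \<Rightarrow> (('m \<Rightarrow> 'v::real_vector) \<Rightarrow> ('m \<Rightarrow> 'v) \<Rightarrow> ('m \<Rightarrow> 'v)) \<Rightarrow> ('m \<Rightarrow> 'v \<Rightarrow> 'v) \<Rightarrow> bool" where
  "integrable Gam br K \<longleftrightarrow>
     (\<forall>u\<in>Gam. \<forall>v\<in>Gam. \<forall>x.
        br (\<lambda>y. K y (u y)) (\<lambda>y. K y (v y)) x - br u v x
        - K x (br (\<lambda>y. K y (u y)) v x + br u (\<lambda>y. K y (v y)) x) = 0)"

definition generalized_kahler ::
  "('m \<Rightarrow> real) set \<Rightarrow> ('m \<Rightarrow> 'v::euclidean_space set) \<Rightarrow> ('m \<Rightarrow> 'v) set
   \<Rightarrow> ('m \<Rightarrow> 'v \<Rightarrow> 'v \<Rightarrow> real)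
   \<Rightarrow> (('m \<Rightarrow> 'v) \<Rightarrow> ('m \<Rightarrow> 'v) \<Rightarrow> ('m \<Rightarrow> 'v))
   \<Rightarrow> (('m \<Rightarrow> 'v) \<Rightarrow> ('m \<Rightarrow> real) \<Rightarrow> ('m \<Rightarrow> real))
   \<Rightarrow> ('m \<Rightarrow> 'v set) \<Rightarrow> ('m \<Rightarrow> 'v \<Rightarrow> 'v) \<Rightarrow> bool" where
  "generalized_kahler C E Gam ip br anc Ep J \<longleftrightarrow>
     courant_algebroid C E Gam ip br anc \<and>
     generalized_metric E Gam ip Ep \<and>
     gen_almost_complex E Gam ip J \<and>
     (\<forall>x. \<forall>a\<in>E x. \<forall>b\<in>E x. Gmet E ip Ep x (J x a) (J x b) = Gmet E ip Ep x a b) \<and>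
     integrable Gam br J \<and>
     integrable Gam br (\<lambda>x a. Gend E ip Ep x (J x a))"

end

theory Submission
  imports Defs
begin

text \<open>Since \<open>J\<close> preserves both the pairing and \<open>G\<close>, it commutes with \<open>G\<^sup>e\<^sup>n\<^sup>d\<close>; hence it
  preserves \<open>E\<^sub>+\<close> and \<open>E\<^sub>-\<close> and commutes with the projections \<open>e \<mapsto> e\<^sub>\<plusminus>\<close>.
  Put \<open>K = G\<^sup>e\<^sup>n\<^sup>d J\<close>. For \<open>u \<in> \<Gamma>(E\<^sub>-)\<close> and \<open>v \<in> \<Gamma>(E\<^sub>+)\<close> we have \<open>K u = - J u\<close> and
  \<open>K v = J v\<close>, so integrability of \<open>K\<close> reads
  \<open>- [Ju, Jv] - [u, v] - K (- [Ju, v] + [u, Jv]) = 0\<close>. On \<open>E\<^sub>+\<close> the operator \<open>K\<close> acts as \<open>J\<close>,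
  so adding the \<open>E\<^sub>+\<close>-components of this identity and of the integrability identity of \<open>J\<close>
  leaves \<open>- 2 ([u, v]\<^sub>+ + J [u, Jv]\<^sub>+) = 0\<close>, i.e. \<open>[u, Jv]\<^sub>+ = J [u, v]\<^sub>+\<close>. The second identity
  is the same computation on \<open>E\<^sub>-\<close>, where \<open>K = - J\<close>.

  The one non-formal ingredient is the splitting \<open>E = E\<^sub>+ \<oplus> E\<^sub>-\<close> in each fibre, which holds
  because the pairing is nondegenerate on the finite-dimensional space \<open>E\<^sub>+\<close>.\<close>

lemma additive_inj_on_subspace_imp_image_eq:
  fixes f :: "'a::euclidean_space \<Rightarrow> 'a"
  assumes S: "subspace S" and maps_to: "f ` S \<subseteq> S" and inj: "inj_on f S"
    and add: "\<And>a b. a \<in> S \<Longrightarrow> b \<in> S \<Longrightarrow> f (a + b) = f a + f b"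
    and scale: "\<And>r a. a \<in> S \<Longrightarrow> f (r *\<^sub>R a) = r *\<^sub>R f a"
  shows "f ` S = S"
proof -
  obtain B where B: "B \<subseteq> S" "independent B" "S \<subseteq> span B"
    using maximal_independent_subset by blast
  have span_B: "span B = S"
    using B S by (simp add: span_subspace)
  define g where "g = construct B f"
  have g: "linear g"
    unfolding g_def using B(2) by (rule linear_construct)
  have "a \<in> S \<and> g a = f a" if "a \<in> span B" for a
  proof (rule span_induct[OF that])
    have "f 0 = 0"
      using scale[of 0 0] S by (simp add: subspace_0)
    then show "subspace {a. a \<in> S \<and> g a = f a}"
      using S unfolding subspace_def
      by (auto simp: add scale linear_add[OF g] linear_scale[OF g] linear_0[OF g])
  qed (use B construct_basis[OF B(2)] g_def in auto)
  then have g_eq_f: "a \<in> S \<Longrightarrow> g a = f a" for a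
    using span_B by blast
  have "inj_on g (span S)"
    unfolding span_eq_iff[THEN iffD2, OF S] using inj g_eq_f by (simp add: inj_on_def)
  then have "dim (g ` S) = dim S"
    by (rule dim_image_eq[OF g])
  moreover have "g ` S \<subseteq> S"
    using maps_to g_eq_f by auto
  ultimately have "g ` S = S"
    using subspace_dim_equal[OF linear_subspace_image[OF g S] S] by simp
  then show ?thesis
    using g_eq_f by (simp cong: image_cong)
qed

definition gram_map :: "('v \<Rightarrow> 'v \<Rightarrow> real) \<Rightarrow> 'v set \<Rightarrow> 'v \<Rightarrow> 'v::real_vector" where
  "gram_map B S e = (\<Sum>b\<in>S. B e b *\<^sub>R b)"

lemma gram_map_in_span: "gram_map B S e \<in> span S"
  unfolding gram_map_def by (intro span_sum span_mul span_base)

locale orthogonal_splitting =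
  fixes E :: "'m \<Rightarrow> 'v::euclidean_space set" and ip :: "'m \<Rightarrow> 'v \<Rightarrow> 'v \<Rightarrow> real"
    and Ep :: "'m \<Rightarrow> 'v set" and x :: 'm
  assumes subspace_E: "subspace (E x)"
    and subspace_Ep: "subspace (Ep x)"
    and Ep_subset: "Ep x \<subseteq> E x"
    and ip_add_left: "a \<in> E x \<Longrightarrow> b \<in> E x \<Longrightarrow> c \<in> E x \<Longrightarrow> ip x (a + b) c = ip x a c + ip x b c"
    and ip_scale_left: "a \<in> E x \<Longrightarrow> c \<in> E x \<Longrightarrow> ip x (r *\<^sub>R a) c = r * ip x a c"
    and ip_sym: "a \<in> E x \<Longrightarrow> b \<in> E x \<Longrightarrow> ip x a b = ip x b a"
    and nondegenerate_Ep: "a \<in> Ep x \<Longrightarrow> (\<And>b. b \<in> Ep x \<Longrightarrow> ip x a b = 0) \<Longrightarrow> a = 0"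
begin

abbreviation "Em \<equiv> Eminus E ip Ep x"
abbreviation "pp \<equiv> pplus E ip Ep x"
abbreviation "pm \<equiv> pminus E ip Ep x"
abbreviation "Ge \<equiv> Gend E ip Ep x"

lemmas E_closed = subspace_add[OF subspace_E] subspace_diff[OF subspace_E]
  subspace_neg[OF subspace_E] subspace_mul[OF subspace_E]

lemma ip_zero_left: "c \<in> E x \<Longrightarrow> ip x 0 c = 0"
  using ip_scale_left[of c c 0] by simp

lemma ip_minus_left: "a \<in> E x \<Longrightarrow> c \<in> E x \<Longrightarrow> ip x (- a) c = - ip x a c"
  using ip_scale_left[of a c "-1"] by simp

lemma ip_diff_left: "a \<in> E x \<Longrightarrow> b \<in> E x \<Longrightarrow> c \<in> E x \<Longrightarrow> ip x (a - b) c = ip x a c - ip x b c"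
  using ip_add_left[of a "- b" c] by (simp add: ip_minus_left E_closed)

lemma ip_add_right: "a \<in> E x \<Longrightarrow> b \<in> E x \<Longrightarrow> c \<in> E x \<Longrightarrow> ip x a (b + c) = ip x a b + ip x a c"
  by (metis ip_add_left ip_sym E_closed(1))

lemma Ep_in_E: "a \<in> Ep x \<Longrightarrow> a \<in> E x"
  using Ep_subset by blast

lemma Eminus_iff: "m \<in> Em \<longleftrightarrow> m \<in> E x \<and> (\<forall>p\<in>Ep x. ip x m p = 0)"
  unfolding Eminus_def by blast

lemma subspace_Eminus: "subspace Em"
  unfolding subspace_def
  by (auto simp: Eminus_iff ip_zero_left ip_add_left ip_scale_left Ep_in_E subspace_0[OF subspace_E] E_closed)

lemma Ep_Int_Eminus: "a \<in> Ep x \<Longrightarrow> a \<in> Em \<Longrightarrow> a = 0"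
  using nondegenerate_Ep unfolding Eminus_iff by blast

lemma orthogonal_span:
  assumes e: "e \<in> E x" and T: "T \<subseteq> E x" and orth: "\<forall>t\<in>T. ip x e t = 0" and q: "q \<in> span T"
  shows "ip x e q = 0"
proof -
  have "q \<in> {q \<in> E x. ip x q e = 0}"
    using q
  proof (rule span_subspace_induct)
    show "subspace {q \<in> E x. ip x q e = 0}"
      unfolding subspace_def using e
      by (auto simp: ip_zero_left ip_add_left ip_scale_left subspace_0[OF subspace_E] E_closed)
    show "t \<in> {q \<in> E x. ip x q e = 0}" if "t \<in> T" for t
      using that T orth e ip_sym[of t e] by auto
  qed
  then show ?thesis
    using e ip_sym by auto
qed

lemma gram_map_add:
  "S \<subseteq> E x \<Longrightarrow> a \<in> E x \<Longrightarrow> b \<in> E x \<Longrightarrow>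
    gram_map (ip x) S (a + b) = gram_map (ip x) S a + gram_map (ip x) S b"
  unfolding gram_map_def sum.distrib[symmetric]
  by (intro sum.cong) (auto simp: ip_add_left scaleR_add_left)

lemma gram_map_scale:
  "S \<subseteq> E x \<Longrightarrow> a \<in> E x \<Longrightarrow> gram_map (ip x) S (r *\<^sub>R a) = r *\<^sub>R gram_map (ip x) S a"
  unfolding gram_map_def scaleR_sum_right
  by (intro sum.cong) (auto simp: ip_scale_left)

lemma gram_map_diff:
  "S \<subseteq> E x \<Longrightarrow> a \<in> E x \<Longrightarrow> b \<in> E x \<Longrightarrow>
    gram_map (ip x) S (a - b) = gram_map (ip x) S a - gram_map (ip x) S b"
  using gram_map_add[of S a "(-1) *\<^sub>R b"] gram_map_scale[of S b "-1"] by (simp add: E_closed)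

lemma gram_map_eq_0_imp_orthogonal:
  assumes B: "independent B" "B \<subseteq> E x" and e: "e \<in> E x" "gram_map (ip x) B e = 0"
    and q: "q \<in> span B"
  shows "ip x e q = 0"
proof -
  have "\<forall>b\<in>B. ip x e b = 0"
    using independentD[OF B(1) independent_imp_finite[OF B(1)] order_refl, of "\<lambda>b. ip x e b"] e(2)
    unfolding gram_map_def by blast
  then show ?thesis
    using orthogonal_span[OF e(1) B(2) _ q] by blast
qed

text \<open>The Gram map of a basis of \<open>Ep x\<close> is injective on \<open>Ep x\<close> by nondegeneracy, hence onto;
  a preimage \<open>p\<close> of the Gram image of \<open>a\<close> makes \<open>a - p\<close> orthogonal to \<open>Ep x\<close>.\<close>

lemma exists_orthogonal_decomposition:
  assumes a: "a \<in> E x"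
  shows "\<exists>p\<in>Ep x. a - p \<in> Em"
proof -
  obtain B where B: "B \<subseteq> Ep x" "independent B" "Ep x \<subseteq> span B"
    using maximal_independent_subset by blast
  have span_B: "span B = Ep x"
    using B subspace_Ep by (simp add: span_subspace)
  have B_E: "B \<subseteq> E x"
    using B(1) Ep_subset by blast
  let ?f = "gram_map (ip x) B"
  have kernel: "e \<in> Em" if "e \<in> E x" "?f e = 0" for e
    using gram_map_eq_0_imp_orthogonal[OF B(2) B_E that] that(1) span_B
    unfolding Eminus_iff by blast
  have "?f ` Ep x = Ep x"
  proof (rule additive_inj_on_subspace_imp_image_eq[OF subspace_Ep])
    show "?f ` Ep x \<subseteq> Ep x"
      using gram_map_in_span[of "ip x" B] span_B by blast
    show "inj_on ?f (Ep x)"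
    proof (rule inj_onI)
      fix p q assume p: "p \<in> Ep x" and q: "q \<in> Ep x" and "?f p = ?f q"
      then have "p - q \<in> Em"
        using kernel[of "p - q"] B_E Ep_in_E by (simp add: gram_map_diff E_closed)
      then show "p = q"
        using Ep_Int_Eminus[of "p - q"] subspace_diff[OF subspace_Ep p q] by simp
    qed
  qed (simp_all add: gram_map_add gram_map_scale B_E Ep_in_E)
  then obtain p where p: "p \<in> Ep x" "?f p = ?f a"
    using gram_map_in_span[of "ip x" B a] span_B by (metis imageE)
  then have "a - p \<in> Em"
    using kernel[of "a - p"] a B_E Ep_in_E by (simp add: gram_map_diff E_closed)
  with p(1) show ?thesis
    by blast
qed

lemma pplus_eqI: "p \<in> Ep x \<Longrightarrow> a - p \<in> Em \<Longrightarrow> pp a = p"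
  unfolding pplus_def
proof (rule the_equality)
  fix q assume "p \<in> Ep x" "a - p \<in> Em" "q \<in> Ep x \<and> a - q \<in> Em"
  then have "q - p \<in> Ep x" "q - p \<in> Em"
    using subspace_diff[OF subspace_Ep] subspace_diff[OF subspace_Eminus, of "a - p" "a - q"]
    by auto
  then show "q = p"
    using Ep_Int_Eminus[of "q - p"] by simp
qed simp

lemma pplus_mem: "a \<in> E x \<Longrightarrow> pp a \<in> Ep x"
  and pminus_mem: "a \<in> E x \<Longrightarrow> pm a \<in> Em"
  using exists_orthogonal_decomposition pplus_eqI unfolding pminus_def by metis+

lemma pplus_mem_E: "a \<in> E x \<Longrightarrow> pp a \<in> E x"
  and pminus_mem_E: "a \<in> E x \<Longrightarrow> pm a \<in> E x"
  using pplus_mem Ep_in_E pminus_mem Eminus_iff by blast+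

lemma pplus_add: "a \<in> E x \<Longrightarrow> b \<in> E x \<Longrightarrow> pp (a + b) = pp a + pp b"
proof (rule pplus_eqI)
  assume a: "a \<in> E x" and b: "b \<in> E x"
  show "pp a + pp b \<in> Ep x"
    using pplus_mem a b subspace_add[OF subspace_Ep] by blast
  have "a + b - (pp a + pp b) = pm a + pm b"
    unfolding pminus_def by simp
  then show "a + b - (pp a + pp b) \<in> Em"
    using pminus_mem a b subspace_add[OF subspace_Eminus] by metis
qed

lemma pplus_scale: "a \<in> E x \<Longrightarrow> pp (r *\<^sub>R a) = r *\<^sub>R pp a"
proof (rule pplus_eqI)
  assume a: "a \<in> E x"
  show "r *\<^sub>R pp a \<in> Ep x"
    using pplus_mem a subspace_mul[OF subspace_Ep] by blast
  have "r *\<^sub>R a - r *\<^sub>R pp a = r *\<^sub>R pm a"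
    unfolding pminus_def by (simp add: scaleR_diff_right)
  then show "r *\<^sub>R a - r *\<^sub>R pp a \<in> Em"
    using pminus_mem a subspace_mul[OF subspace_Eminus] by metis
qed

lemma pplus_minus: "a \<in> E x \<Longrightarrow> pp (- a) = - pp a"
  using pplus_scale[of a "-1"] by simp

lemma pplus_diff: "a \<in> E x \<Longrightarrow> b \<in> E x \<Longrightarrow> pp (a - b) = pp a - pp b"
  using pplus_add[of a "- b"] by (simp add: pplus_minus E_closed)

lemma pminus_add: "a \<in> E x \<Longrightarrow> b \<in> E x \<Longrightarrow> pm (a + b) = pm a + pm b"
  and pminus_minus: "a \<in> E x \<Longrightarrow> pm (- a) = - pm a"
  and pminus_diff: "a \<in> E x \<Longrightarrow> b \<in> E x \<Longrightarrow> pm (a - b) = pm a - pm b"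
  unfolding pminus_def by (simp_all add: pplus_add pplus_minus pplus_diff)

lemma pplus_Ep: "a \<in> Ep x \<Longrightarrow> pp a = a"
  by (rule pplus_eqI) (simp_all add: subspace_0[OF subspace_Eminus])

lemma pplus_Eminus: "a \<in> Em \<Longrightarrow> pp a = 0"
  by (rule pplus_eqI) (simp_all add: subspace_0[OF subspace_Ep])

lemma pplus_0: "pp 0 = 0"
  by (rule pplus_Ep[OF subspace_0[OF subspace_Ep]])

lemma pminus_0: "pm 0 = 0"
  unfolding pminus_def by (simp add: pplus_0)

lemma Gend_Ep: "a \<in> Ep x \<Longrightarrow> Ge a = a"
  unfolding Gend_def pminus_def by (simp add: pplus_Ep)

lemma Gend_Eminus: "a \<in> Em \<Longrightarrow> Ge a = - a"
  unfolding Gend_def pminus_def by (simp add: pplus_Eminus)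

lemma Gend_minus: "a \<in> E x \<Longrightarrow> Ge (- a) = - Ge a"
  unfolding Gend_def by (simp add: pplus_minus pminus_minus)

lemma Gend_eq_self_imp_Ep:
  assumes "a \<in> E x" and "Ge a = a"
  shows "a \<in> Ep x"
proof -
  have "2 *\<^sub>R pp a = 2 *\<^sub>R a"
    using assms(2) unfolding Gend_def pminus_def by (simp add: algebra_simps scaleR_2)
  then show ?thesis
    using pplus_mem[OF assms(1)] by simp
qed

lemma Gend_eq_minus_imp_Eminus:
  assumes "a \<in> E x" and "Ge a = - a"
  shows "a \<in> Em"
proof -
  have "2 *\<^sub>R pp a = 0"
    using assms(2) unfolding Gend_def pminus_def by (simp add: algebra_simps scaleR_2)
  then show ?thesis
    using pminus_mem[OF assms(1)] unfolding pminus_def by simp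
qed

lemma pplus_Gend: "a \<in> E x \<Longrightarrow> pp (Ge a) = pp a"
  unfolding Gend_def
  by (simp add: pplus_diff pplus_mem_E pminus_mem_E pplus_Ep pplus_mem pplus_Eminus pminus_mem)

lemma pminus_Gend: "a \<in> E x \<Longrightarrow> pm (Ge a) = - pm a"
  using pplus_Gend unfolding pminus_def Gend_def by simp

lemma Gend_mem_E: "a \<in> E x \<Longrightarrow> Ge a \<in> E x"
  unfolding Gend_def by (simp add: pplus_mem_E pminus_mem_E E_closed)

lemma ip_Gend:
  assumes a: "a \<in> E x" and b: "b \<in> E x"
  shows "ip x (Ge a) b = Gmet E ip Ep x a b"
proof -
  have orth: "ip x (pm c) (pp d) = 0" "ip x (pp d) (pm c) = 0" if "c \<in> E x" "d \<in> E x" for c d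
    using that pminus_mem pplus_mem ip_sym pplus_mem_E pminus_mem_E unfolding Eminus_iff by metis+
  have "ip x (Ge a) b = ip x (pp a - pm a) (pp b + pm b)"
    unfolding Gend_def pminus_def by simp
  also have "\<dots> = ip x (pp a) (pp b) - ip x (pm a) (pm b)"
    using a b orth
    by (simp add: ip_diff_left ip_add_right pplus_mem_E pminus_mem_E E_closed)
  finally show ?thesis
    unfolding Gmet_def .
qed

end

locale hermitian_fibre = orthogonal_splitting E ip Ep x
  for E :: "'m \<Rightarrow> 'v::euclidean_space set" and ip Ep x +
  fixes J :: "'m \<Rightarrow> 'v \<Rightarrow> 'v"
  assumes nondegenerate_E: "a \<in> E x \<Longrightarrow> (\<And>b. b \<in> E x \<Longrightarrow> ip x a b = 0) \<Longrightarrow> a = 0"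
    and J_mem: "a \<in> E x \<Longrightarrow> J x a \<in> E x"
    and J_add: "a \<in> E x \<Longrightarrow> b \<in> E x \<Longrightarrow> J x (a + b) = J x a + J x b"
    and J_scale: "a \<in> E x \<Longrightarrow> J x (r *\<^sub>R a) = r *\<^sub>R J x a"
    and J_J: "a \<in> E x \<Longrightarrow> J x (J x a) = - a"
    and ip_J: "a \<in> E x \<Longrightarrow> b \<in> E x \<Longrightarrow> ip x (J x a) (J x b) = ip x a b"
    and Gmet_J: "a \<in> E x \<Longrightarrow> b \<in> E x \<Longrightarrow> Gmet E ip Ep x (J x a) (J x b) = Gmet E ip Ep x a b"
begin

lemma J_minus: "a \<in> E x \<Longrightarrow> J x (- a) = - J x a"
  using J_scale[of a "-1"] by simp

lemma J_diff: "a \<in> E x \<Longrightarrow> b \<in> E x \<Longrightarrow> J x (a - b) = J x a - J x b"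
  using J_add[of a "- b"] by (simp add: J_minus E_closed)

lemma ip_J_left: "a \<in> E x \<Longrightarrow> b \<in> E x \<Longrightarrow> ip x (J x a) b = - ip x a (J x b)"
  using ip_J[of "J x a" b] by (simp add: J_mem J_J ip_minus_left)

lemma Gend_J: assumes a: "a \<in> E x" shows "Ge (J x a) = J x (Ge a)"
proof (rule eq_iff_diff_eq_0[THEN iffD2], rule nondegenerate_E)
  show "Ge (J x a) - J x (Ge a) \<in> E x"
    using a by (simp add: Gend_mem_E J_mem E_closed)
  fix b assume b: "b \<in> E x"
  have "ip x (Ge (J x a)) b = Gmet E ip Ep x (J x (J x a)) (J x b)"
    using a b by (simp add: ip_Gend J_mem Gmet_J)
  also have "\<dots> = - ip x (Ge a) (J x b)"
    using a b by (simp add: J_J ip_Gend[symmetric] J_mem Gend_minus ip_minus_left Gend_mem_E E_closed)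
  also have "\<dots> = ip x (J x (Ge a)) b"
    using a b by (simp add: ip_J_left Gend_mem_E)
  finally show "ip x (Ge (J x a) - J x (Ge a)) b = 0"
    using a b by (simp add: ip_diff_left Gend_mem_E J_mem)
qed

lemma J_Ep: "a \<in> Ep x \<Longrightarrow> J x a \<in> Ep x"
  by (rule Gend_eq_self_imp_Ep) (simp_all add: Gend_J Gend_Ep Ep_in_E J_mem)

lemma J_Eminus: "a \<in> Em \<Longrightarrow> J x a \<in> Em"
  by (rule Gend_eq_minus_imp_Eminus) (simp_all add: Gend_J Gend_Eminus J_minus Eminus_iff J_mem)

lemma pplus_J: "a \<in> E x \<Longrightarrow> pp (J x a) = J x (pp a)"
proof (rule pplus_eqI)
  assume a: "a \<in> E x"
  show "J x (pp a) \<in> Ep x"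
    using a by (simp add: J_Ep pplus_mem)
  have "J x a - J x (pp a) = J x (pm a)"
    using a unfolding pminus_def by (simp add: J_diff pplus_mem_E)
  then show "J x a - J x (pp a) \<in> Em"
    using a by (simp add: J_Eminus pminus_mem)
qed

lemma pminus_J: "a \<in> E x \<Longrightarrow> pm (J x a) = J x (pm a)"
  unfolding pminus_def by (simp add: pplus_J J_diff pplus_mem_E)

lemma pplus_Gend_J: "a \<in> E x \<Longrightarrow> pp (Ge (J x a)) = J x (pp a)"
  by (simp add: pplus_Gend pplus_J J_mem)

lemma pminus_Gend_J: "a \<in> E x \<Longrightarrow> pm (Ge (J x a)) = - J x (pm a)"
  by (simp add: pminus_Gend pminus_J J_mem)

lemma eq_J_of_paired_equations:
  assumes "b \<in> E x" "d \<in> E x"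
    and "- a - b + J x c - J x d = 0" and "a - b - J x c - J x d = 0"
  shows "d = J x b"
proof -
  have "- (2 *\<^sub>R (b + J x d)) = (- a - b + J x c - J x d) + (a - b - J x c - J x d)"
    by (simp add: algebra_simps scaleR_2)
  then have "J x d = - b"
    using assms(3,4) by (simp add: add_eq_0_iff2)
  then show ?thesis
    using assms(1,2) J_J[of d] by (simp add: J_minus)
qed

text \<open>In the two lemmas below, \<open>a, b, c, d\<close> stand for the values at \<open>x\<close> of \<open>[Ju, Jv]\<close>, \<open>[u, v]\<close>,
  \<open>[Ju, v]\<close>, \<open>[u, Jv]\<close>; the hypotheses are the integrability identities of \<open>G\<^sup>e\<^sup>n\<^sup>d J\<close> and of \<open>J\<close>.\<close>

lemma Ep_component_of_integrability:
  assumes mem: "a \<in> E x" "b \<in> E x" "c \<in> E x" "d \<in> E x"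
    and N_K: "- a - b - Ge (J x (- c + d)) = 0"
    and N_J: "a - b - J x (c + d) = 0"
  shows "pp d = J x (pp b)"
proof (rule eq_J_of_paired_equations)
  have "pp (Ge (J x (- c + d))) = - J x (pp c) + J x (pp d)"
    by (subst pplus_Gend_J) (use mem in \<open>simp_all add: pplus_diff J_diff pplus_mem_E E_closed\<close>)
  then show "- pp a - pp b + J x (pp c) - J x (pp d) = 0"
    using arg_cong[OF N_K, of pp] mem by (simp add: pplus_0 pplus_diff pplus_minus Gend_mem_E J_mem E_closed)
  show "pp a - pp b - J x (pp c) - J x (pp d) = 0"
    using arg_cong[OF N_J, of pp] mem
    by (simp add: pplus_0 pplus_diff pplus_add pplus_J J_add pplus_mem_E J_mem E_closed)
qed (simp_all add: mem pplus_mem_E)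

lemma Eminus_component_of_integrability:
  assumes mem: "a \<in> E x" "b \<in> E x" "c \<in> E x" "d \<in> E x"
    and N_K: "- a - b - Ge (J x (c - d)) = 0"
    and N_J: "a - b - J x (c + d) = 0"
  shows "pm d = J x (pm b)"
proof (rule eq_J_of_paired_equations)
  have "pm (Ge (J x (c - d))) = - J x (pm c) + J x (pm d)"
    by (subst pminus_Gend_J) (use mem in \<open>simp_all add: pminus_diff J_diff pminus_mem_E E_closed\<close>)
  then show "- pm a - pm b + J x (pm c) - J x (pm d) = 0"
    using arg_cong[OF N_K, of pm] mem by (simp add: pminus_0 pminus_diff pminus_minus Gend_mem_E J_mem E_closed)
  show "pm a - pm b - J x (pm c) - J x (pm d) = 0"
    using arg_cong[OF N_J, of pm] mem
    by (simp add: pminus_0 pminus_diff pminus_add pminus_J J_add pminus_mem_E J_mem E_closed)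
qed (simp_all add: mem pminus_mem_E)

end

locale generalized_kahler_structure =
  fixes C :: "('m \<Rightarrow> real) set" and E :: "'m \<Rightarrow> 'v::euclidean_space set"
    and Gam :: "('m \<Rightarrow> 'v) set" and ip :: "'m \<Rightarrow> 'v \<Rightarrow> 'v \<Rightarrow> real"
    and br :: "('m \<Rightarrow> 'v) \<Rightarrow> ('m \<Rightarrow> 'v) \<Rightarrow> ('m \<Rightarrow> 'v)"
    and anc :: "('m \<Rightarrow> 'v) \<Rightarrow> ('m \<Rightarrow> real) \<Rightarrow> ('m \<Rightarrow> real)"
    and Ep :: "'m \<Rightarrow> 'v set" and J :: "'m \<Rightarrow> 'v \<Rightarrow> 'v"
  assumes generalized_kahler: "generalized_kahler C E Gam ip br anc Ep J"
begin

lemma courant: "courant_algebroid C E Gam ip br anc"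
  and metric: "generalized_metric E Gam ip Ep"
  and complex: "gen_almost_complex E Gam ip J"
  and Gmet_J_invariant: "\<forall>x. \<forall>a\<in>E x. \<forall>b\<in>E x. Gmet E ip Ep x (J x a) (J x b) = Gmet E ip Ep x a b"
  and J_integrable: "integrable Gam br J"
  and Gend_J_integrable: "integrable Gam br (\<lambda>x a. Gend E ip Ep x (J x a))"
  using generalized_kahler unfolding generalized_kahler_def by auto

lemma sections: "bundle_sections C E Gam"
  using courant unfolding courant_algebroid_def by blast

lemma hermitian_fibre: "hermitian_fibre E ip Ep x J"
proof -
  have "sym_bilinear_on E ip" "nondegenerate_on E ip"
    using courant unfolding courant_algebroid_def by auto
  then show ?thesis
    using sections metric complex Gmet_J_invariant
    unfolding bundle_sections_def sym_bilinear_on_def nondegenerate_on_def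
      generalized_metric_def gen_almost_complex_def
    by unfold_locales auto
qed

lemma orthogonal_splitting: "orthogonal_splitting E ip Ep x"
  by (rule hermitian_fibre.axioms(1)[OF hermitian_fibre])

lemma section_mem: "s \<in> Gam \<Longrightarrow> s x \<in> E x"
  using sections unfolding bundle_sections_def by blast

lemma bracket_closed: "u \<in> Gam \<Longrightarrow> v \<in> Gam \<Longrightarrow> br u v \<in> Gam"
  using courant unfolding courant_algebroid_def by blast

lemma J_closed: "u \<in> Gam \<Longrightarrow> (\<lambda>y. J y (u y)) \<in> Gam"
  using complex unfolding gen_almost_complex_def by blast

lemma bracket_scale:
  assumes "u \<in> Gam" "w \<in> Gam"
  shows "br (\<lambda>y. r *\<^sub>R u y) w = (\<lambda>y. r *\<^sub>R br u w y)"
    and "br w (\<lambda>y. r *\<^sub>R u y) = (\<lambda>y. r *\<^sub>R br w u y)"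
proof -
  have "\<forall>u\<in>Gam. \<forall>v\<in>Gam. \<forall>w\<in>Gam. \<forall>r::real.
      br (\<lambda>x. r *\<^sub>R u x) w = (\<lambda>x. r *\<^sub>R br u w x) \<and>
      br w (\<lambda>x. r *\<^sub>R u x) = (\<lambda>x. r *\<^sub>R br w u x)"
    using courant unfolding courant_algebroid_def by blast
  then show "br (\<lambda>y. r *\<^sub>R u y) w = (\<lambda>y. r *\<^sub>R br u w y)"
    and "br w (\<lambda>y. r *\<^sub>R u y) = (\<lambda>y. r *\<^sub>R br w u y)"
    using assms by blast+
qed

lemma bracket_minus_left: "u \<in> Gam \<Longrightarrow> w \<in> Gam \<Longrightarrow> br (\<lambda>y. - u y) w = (\<lambda>y. - br u w y)"
  and bracket_minus_right: "u \<in> Gam \<Longrightarrow> w \<in> Gam \<Longrightarrow> br w (\<lambda>y. - u y) = (\<lambda>y. - br w u y)"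
  using bracket_scale[of u w "-1"] by simp_all

lemma Gend_J_section_Ep:
  "\<forall>y. v y \<in> Ep y \<Longrightarrow> (\<lambda>y. Gend E ip Ep y (J y (v y))) = (\<lambda>y. J y (v y))"
proof
  fix y assume "\<forall>y. v y \<in> Ep y"
  then show "Gend E ip Ep y (J y (v y)) = J y (v y)"
    using hermitian_fibre.J_Ep[OF hermitian_fibre] orthogonal_splitting.Gend_Ep[OF orthogonal_splitting]
    by blast
qed

lemma Gend_J_section_Eminus:
  "\<forall>y. u y \<in> Eminus E ip Ep y \<Longrightarrow> (\<lambda>y. Gend E ip Ep y (J y (u y))) = (\<lambda>y. - J y (u y))"
proof
  fix y assume "\<forall>y. u y \<in> Eminus E ip Ep y"
  then show "Gend E ip Ep y (J y (u y)) = - J y (u y)"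
    using hermitian_fibre.J_Eminus[OF hermitian_fibre] orthogonal_splitting.Gend_Eminus[OF orthogonal_splitting]
    by blast
qed

lemma J_integrable_at:
  "u \<in> Gam \<Longrightarrow> v \<in> Gam \<Longrightarrow>
    br (\<lambda>y. J y (u y)) (\<lambda>y. J y (v y)) x - br u v x
    - J x (br (\<lambda>y. J y (u y)) v x + br u (\<lambda>y. J y (v y)) x) = 0"
  using J_integrable unfolding integrable_def by blast

lemma Gend_J_integrable_at:
  "u \<in> Gam \<Longrightarrow> v \<in> Gam \<Longrightarrow>
    br (\<lambda>y. Gend E ip Ep y (J y (u y))) (\<lambda>y. Gend E ip Ep y (J y (v y))) x - br u v x
    - Gend E ip Ep x (J x (br (\<lambda>y. Gend E ip Ep y (J y (u y))) v x
        + br u (\<lambda>y. Gend E ip Ep y (J y (v y))) x)) = 0"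
  using Gend_J_integrable unfolding integrable_def by blast

lemma bracket_J_Ep_component:
  assumes u: "u \<in> Gam" and v: "v \<in> Gam"
    and u_minus: "\<forall>y. u y \<in> Eminus E ip Ep y" and v_plus: "\<forall>y. v y \<in> Ep y"
  shows "pplus E ip Ep x (br u (\<lambda>y. J y (v y)) x) = J x (pplus E ip Ep x (br u v x))"
proof (rule hermitian_fibre.Ep_component_of_integrability[OF hermitian_fibre])
  show "- br (\<lambda>y. J y (u y)) (\<lambda>y. J y (v y)) x - br u v x
      - Gend E ip Ep x (J x (- br (\<lambda>y. J y (u y)) v x + br u (\<lambda>y. J y (v y)) x)) = 0"
    using Gend_J_integrable_at[OF u v, of x]
    by (simp add: Gend_J_section_Eminus[OF u_minus] Gend_J_section_Ep[OF v_plus]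
        bracket_minus_left J_closed u v)
  show "br (\<lambda>y. J y (u y)) (\<lambda>y. J y (v y)) x - br u v x
      - J x (br (\<lambda>y. J y (u y)) v x + br u (\<lambda>y. J y (v y)) x) = 0"
    by (rule J_integrable_at[OF u v])
qed (simp_all add: section_mem bracket_closed J_closed u v)

lemma bracket_J_Eminus_component:
  assumes u: "u \<in> Gam" and v: "v \<in> Gam"
    and u_plus: "\<forall>y. u y \<in> Ep y" and v_minus: "\<forall>y. v y \<in> Eminus E ip Ep y"
  shows "pminus E ip Ep x (br u (\<lambda>y. J y (v y)) x) = J x (pminus E ip Ep x (br u v x))"
proof (rule hermitian_fibre.Eminus_component_of_integrability[OF hermitian_fibre])
  show "- br (\<lambda>y. J y (u y)) (\<lambda>y. J y (v y)) x - br u v x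
      - Gend E ip Ep x (J x (br (\<lambda>y. J y (u y)) v x - br u (\<lambda>y. J y (v y)) x)) = 0"
    using Gend_J_integrable_at[OF u v, of x]
    by (simp add: Gend_J_section_Ep[OF u_plus] Gend_J_section_Eminus[OF v_minus]
        bracket_minus_right J_closed u v)
  show "br (\<lambda>y. J y (u y)) (\<lambda>y. J y (v y)) x - br u v x
      - J x (br (\<lambda>y. J y (u y)) v x + br u (\<lambda>y. J y (v y)) x) = 0"
    by (rule J_integrable_at[OF u v])
qed (simp_all add: section_mem bracket_closed J_closed u v)

end

theorem lemma5p1:
  fixes C :: "('m \<Rightarrow> real) set"
    and E :: "'m \<Rightarrow> 'v::euclidean_space set"
    and Gam :: "('m \<Rightarrow> 'v) set"
    and ip :: "'m \<Rightarrow> 'v \<Rightarrow> 'v \<Rightarrow> real"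
    and br :: "('m \<Rightarrow> 'v) \<Rightarrow> ('m \<Rightarrow> 'v) \<Rightarrow> ('m \<Rightarrow> 'v)"
    and anc :: "('m \<Rightarrow> 'v) \<Rightarrow> ('m \<Rightarrow> real) \<Rightarrow> ('m \<Rightarrow> real)"
    and Ep :: "'m \<Rightarrow> 'v set"
    and J :: "'m \<Rightarrow> 'v \<Rightarrow> 'v"
  assumes "generalized_kahler C E Gam ip br anc Ep J"
  shows "(\<forall>u\<in>Gam. \<forall>v\<in>Gam. (\<forall>x. u x \<in> Eminus E ip Ep x) \<longrightarrow> (\<forall>x. v x \<in> Ep x) \<longrightarrow>
            (\<forall>x. pplus E ip Ep x (br u (\<lambda>y. J y (v y)) x) - J x (pplus E ip Ep x (br u v x)) = 0))
       \<and> (\<forall>u\<in>Gam. \<forall>v\<in>Gam. (\<forall>x. u x \<in> Ep x) \<longrightarrow> (\<forall>x. v x \<in> Eminus E ip Ep x) \<longrightarrow>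
            (\<forall>x. pminus E ip Ep x (br u (\<lambda>y. J y (v y)) x) - J x (pminus E ip Ep x (br u v x)) = 0))"
proof -
  interpret generalized_kahler_structure C E Gam ip br anc Ep J
    by unfold_locales (rule assms)
  show ?thesis
    using bracket_J_Ep_component bracket_J_Eminus_component by simp
qed

end
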